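(* Let $X$ be a real vector space, let $D \subseteq X$ be a convex set, and let $f: D \to \mathbf{R}\cup\{+\infty\}$ be radially lower semicontinuous. Then $f$ is convex, i.e. $f(\lambda x+(1-\lambda)y) \le \lambda f(x)+(1-\lambda)f(y)$ for all $x,y \in D$ and all $\lambda \in [0,1]$, if and only if for all $x,y \in D$ there exists $\lambda=\lambda(x,y) \in (0,1)$ such that $f(\lambda x+(1-\lambda)y) \le \lambda f(x)+(1-\lambda)f(y)$.
   Context: A function $f: D \to \mathbf{R}\cup\{+\infty\}$ on a convex subset $D$ of a real vector space is called radially lower semicontinuous if $f(x) \le \liminf_{t \downarrow 0} f(x+t(y-x))$ for all $x,y \in D$. Arithmetic in $\mathbf{R}\cup\{+\infty\}$ follows the usual conventions ($a+(+\infty)=+\infty$ for $a\in\mathbf{R}\cup\{+\infty\}$, $c\cdot(+\infty)=+\infty$ for $c>0$, and $0\cdot(+\infty)=0$). *)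

theory Defs
  imports "HOL-Analysis.Analysis"
begin

text \<open>Functions D -> R \<union> {+\<infinity>} are modelled as f :: 'a => ereal with f x \<noteq> -\<infinity> on D.\<close>

definition radially_lsc :: "'a::real_vector set \<Rightarrow> ('a \<Rightarrow> ereal) \<Rightarrow> bool" where
  "radially_lsc D f \<longleftrightarrow>
     (\<forall>x\<in>D. \<forall>y\<in>D. f x \<le> Liminf (at_right (0::real)) (\<lambda>t. f (x + t *\<^sub>R (y - x))))"

end

(* Fix x, y with finite values and consider the set of t in [0,1] at which f (x + t (y - x))
   lies below the chord. Radial lower semicontinuity at each point of the segment, in the
   directions of both endpoints, makes this set closed; it contains 0 and 1, and the hypothesis
   applied to two of its points yields a point of the set strictly between them. A closed set of
   reals with this betweenness property contains the interval spanned by any two of its points: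
   a point outside would lie in a gap whose two closed ends have nothing of the set between them. *)

theory Submission
  imports Defs
begin

lemma filtermap_affine_at_right_0:
  fixes t u :: real
  shows "t < u \<Longrightarrow> filtermap (\<lambda>r. t + r * (u - t)) (at_right 0) = at_right t"
    and "u < t \<Longrightarrow> filtermap (\<lambda>r. t + r * (u - t)) (at_right 0) = at_left t"
proof -
  define side where "side = {s. 0 < (s - t) / (u - t)}"
  have "filtermap (\<lambda>r. t + r * (u - t)) (at_right 0) = at t within side" if "t \<noteq> u"
  proof (rule filtermap_fun_inverse)
    show "filterlim (\<lambda>s. (s - t) / (u - t)) (at_right 0) (at t within side)"
      unfolding filterlim_at side_def using that
      by (auto simp: eventually_at_filter intro!: tendsto_eq_intros)
    show "filterlim (\<lambda>r. t + r * (u - t)) (at t within side) (at_right 0)"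
      unfolding filterlim_at side_def using that
      by (auto simp: eventually_at_filter intro!: tendsto_eq_intros)
  qed (use that in auto)
  moreover have "t < u \<Longrightarrow> side = {t<..}" and "u < t \<Longrightarrow> side = {..<t}"
    by (auto simp: side_def zero_less_divide_iff)
  ultimately show "t < u \<Longrightarrow> filtermap (\<lambda>r. t + r * (u - t)) (at_right 0) = at_right t"
    and "u < t \<Longrightarrow> filtermap (\<lambda>r. t + r * (u - t)) (at_right 0) = at_left t"
    by auto
qed

lemma radially_lsc_eventually_less:
  fixes f :: "'a::real_vector \<Rightarrow> ereal"
  assumes "radially_lsc D f" "p \<in> D" "q \<in> D"
    and "(h \<longlongrightarrow> c) (at_right 0)" "ereal c < f p"
  shows "\<forall>\<^sub>F r in at_right 0. ereal (h r) < f (p + r *\<^sub>R (q - p))"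
proof -
  obtain b where "c < b" and b: "ereal b < f p"
    using ereal_dense2[OF assms(5)] by auto
  have "f p \<le> Liminf (at_right 0) (\<lambda>r. f (p + r *\<^sub>R (q - p)))"
    using assms(1-3) unfolding radially_lsc_def by blast
  then have "\<forall>\<^sub>F r in at_right 0. ereal b < f (p + r *\<^sub>R (q - p))"
    using b by (simp add: le_Liminf_iff)
  moreover have "\<forall>\<^sub>F r in at_right 0. h r < b"
    using order_tendstoD(2)[OF assms(4) \<open>c < b\<close>] .
  ultimately show ?thesis
    by eventually_elim (rule less_trans[of _ "ereal b"], auto)
qed

lemma closed_below_affine_on_segment:
  fixes f :: "'a::real_vector \<Rightarrow> ereal"
  assumes "convex D" "radially_lsc D f" "x \<in> D" "y \<in> D"
  shows "closed {t \<in> {0..1}. f (x + t *\<^sub>R (y - x)) \<le> ereal (a + t * d)}"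
    (is "closed ?S")
proof -
  let ?z = "\<lambda>t. x + t *\<^sub>R (y - x)"
  have zD: "?z t \<in> D" if "t \<in> {0..1}" for t
    using convexD_alt[OF assms(1,3,4)] that by (simp add: algebra_simps)
  have towards: "\<forall>\<^sub>F r in at_right 0. t + r * (u - t) \<notin> ?S"
    if t: "t \<in> {0..1}" and u: "u \<in> {0..1}" and above: "ereal (a + t * d) < f (?z t)" for t u
  proof -
    have "((\<lambda>r. a + (t + r * (u - t)) * d) \<longlongrightarrow> a + t * d) (at_right 0)"
      by (auto intro!: tendsto_eq_intros)
    from radially_lsc_eventually_less[OF assms(2) zD[OF t] zD[OF u] this above]
    show ?thesis
    proof eventually_elim
      case (elim r)
      have "?z t + r *\<^sub>R (?z u - ?z t) = ?z (t + r * (u - t))"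
        by (simp add: algebra_simps)
      with elim have "ereal (a + (t + r * (u - t)) * d) < f (?z (t + r * (u - t)))"
        by (simp only:)
      then show ?case by auto
    qed
  qed
  have "\<forall>\<^sub>F s in nhds t. s \<notin> ?S" if "t \<notin> ?S" for t
  proof (cases "t \<in> {0..1}")
    case False
    then have "\<forall>\<^sub>F s in nhds t. s \<in> - {0..1}"
      by (intro eventually_nhds_in_open) auto
    then show ?thesis
      by eventually_elim auto
  next
    case True
    with that have above: "ereal (a + t * d) < f (?z t)" by auto
    have "\<forall>\<^sub>F s in at_left t. s \<notin> ?S"
    proof (cases "t = 0")
      case True
      then show ?thesis by (intro eventually_at_leftI[of "-1"]) auto
    next
      case False
      with \<open>t \<in> {0..1}\<close> have side: "filtermap (\<lambda>r. t + r * (0 - t)) (at_right 0) = at_left t"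
        by (intro filtermap_affine_at_right_0) auto
      show ?thesis
        unfolding side[symmetric] eventually_filtermap
        by (rule towards) (use \<open>t \<in> {0..1}\<close> above in auto)
    qed
    moreover have "\<forall>\<^sub>F s in at_right t. s \<notin> ?S"
    proof (cases "t = 1")
      case True
      then show ?thesis by (intro eventually_at_rightI[of _ 2]) auto
    next
      case False
      with \<open>t \<in> {0..1}\<close> have side: "filtermap (\<lambda>r. t + r * (1 - t)) (at_right 0) = at_right t"
        by (intro filtermap_affine_at_right_0) auto
      show ?thesis
        unfolding side[symmetric] eventually_filtermap
        by (rule towards) (use \<open>t \<in> {0..1}\<close> above in auto)
    qed
    ultimately show ?thesis
      using that by (simp add: eventually_nhds_conv_at eventually_at_split)
  qed
  then have "\<exists>T. open T \<and> t \<in> T \<and> T \<subseteq> - ?S" if "t \<in> - ?S" for t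
    using that unfolding eventually_nhds by blast
  then show ?thesis
    unfolding closed_def open_subopen[of "- ?S"] by blast
qed

lemma Icc_subset_if_closed_and_between:
  fixes S :: "real set"
  assumes "closed S" "a \<in> S" "b \<in> S"
    and between: "\<And>s t. s \<in> S \<Longrightarrow> t \<in> S \<Longrightarrow> s < t \<Longrightarrow> \<exists>c\<in>S. s < c \<and> c < t"
  shows "{a..b} \<subseteq> S"
proof
  fix t assume t: "t \<in> {a..b}"
  show "t \<in> S"
  proof (rule ccontr)
    assume "t \<notin> S"
    define s where "s = Sup (S \<inter> {..t})"
    define u where "u = Inf (S \<inter> {t..})"
    have below: "S \<inter> {..t} \<noteq> {}" "bdd_above (S \<inter> {..t})"
      using t \<open>a \<in> S\<close> by (auto intro: bdd_above_Int2)
    have above: "S \<inter> {t..} \<noteq> {}" "bdd_below (S \<inter> {t..})"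
      using t \<open>b \<in> S\<close> by (auto intro: bdd_below_Int2)
    have "s \<in> S \<inter> {..t}"
      unfolding s_def by (rule closed_contains_Sup[OF below]) (intro closed_Int closed_atMost \<open>closed S\<close>)
    moreover have "u \<in> S \<inter> {t..}"
      unfolding u_def by (rule closed_contains_Inf[OF above]) (intro closed_Int closed_atLeast \<open>closed S\<close>)
    ultimately have "s \<in> S" "u \<in> S" "s < t" "t < u"
      using \<open>t \<notin> S\<close> by (auto simp: less_le)
    then obtain c where "c \<in> S" "s < c" "c < u"
      using between[of s u] by auto
    show False
    proof (cases "c \<le> t")
      case True
      then have "c \<le> s" unfolding s_def using below \<open>c \<in> S\<close> by (intro cSup_upper) auto
      with \<open>s < c\<close> show False by simp
    next
      case False
      then have "u \<le> c" unfolding u_def using above \<open>c \<in> S\<close> by (intro cInf_lower) auto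
      with \<open>c < u\<close> show False by simp
    qed
  qed
qed

lemma below_chord_if_convex_comb_below_chord:
  fixes f :: "'a::real_vector \<Rightarrow> ereal"
  assumes "convex D" "radially_lsc D f" "x \<in> D" "y \<in> D" "f x = ereal a" "f y = ereal b"
    and comb: "\<And>x y. x \<in> D \<Longrightarrow> y \<in> D \<Longrightarrow> \<exists>l\<in>{0<..<1::real}.
                 f (l *\<^sub>R x + (1 - l) *\<^sub>R y) \<le> ereal l * f x + ereal (1 - l) * f y"
    and "t \<in> {0..1}"
  shows "f (x + t *\<^sub>R (y - x)) \<le> ereal (a + t * (b - a))"
proof -
  let ?z = "\<lambda>t. x + t *\<^sub>R (y - x)"
  let ?S = "{t \<in> {0..1}. f (?z t) \<le> ereal (a + t * (b - a))}"
  have zD: "?z t \<in> D" if "t \<in> {0..1}" for t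
    using convexD_alt[OF assms(1,3,4)] that by (simp add: algebra_simps)
  have "{0..1} \<subseteq> ?S"
  proof (rule Icc_subset_if_closed_and_between)
    show "closed ?S"
      by (rule closed_below_affine_on_segment[OF assms(1-4)])
    show "0 \<in> ?S" "1 \<in> ?S"
      using assms(5,6) by simp_all
  next
    fix s u assume s: "s \<in> ?S" and u: "u \<in> ?S" and "s < u"
    then have s01: "s \<in> {0..1}" and u01: "u \<in> {0..1}"
      by simp_all
    obtain l :: real where l: "0 < l" "l < 1"
      and below: "f (l *\<^sub>R ?z s + (1 - l) *\<^sub>R ?z u) \<le> ereal l * f (?z s) + ereal (1 - l) * f (?z u)"
      using comb[OF zD[OF s01] zD[OF u01]] by auto
    define c where "c = l * s + (1 - l) * u"
    have "c - s = (1 - l) * (u - s)" "u - c = l * (u - s)"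
      unfolding c_def by (simp_all add: algebra_simps)
    with l \<open>s < u\<close> have "s < c" "c < u"
      by (metis diff_gt_0_iff_gt mult_pos_pos)+
    have "l *\<^sub>R ?z s + (1 - l) *\<^sub>R ?z u = ?z c"
      unfolding c_def by (simp add: algebra_simps)
    then have "f (?z c) \<le> ereal l * f (?z s) + ereal (1 - l) * f (?z u)"
      using below by simp
    also have "\<dots> \<le> ereal l * ereal (a + s * (b - a)) + ereal (1 - l) * ereal (a + u * (b - a))"
      using s u l by (intro add_mono ereal_mult_left_mono) simp_all
    also have "\<dots> = ereal (a + c * (b - a))"
      unfolding c_def by (simp add: algebra_simps)
    finally have "c \<in> ?S"
      using s01 u01 \<open>s < c\<close> \<open>c < u\<close> by simp
    with \<open>s < c\<close> \<open>c < u\<close> show "\<exists>c\<in>?S. s < c \<and> c < u"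
      by blast
  qed
  with \<open>t \<in> {0..1}\<close> show ?thesis
    by auto
qed

theorem theorem1:
  fixes D :: "'a::real_vector set" and f :: "'a \<Rightarrow> ereal"
  assumes "convex D"
    and "\<forall>x\<in>D. f x \<noteq> -\<infinity>"
    and "radially_lsc D f"
  shows "(\<forall>x\<in>D. \<forall>y\<in>D. \<forall>l\<in>{0..1::real}.
            f (l *\<^sub>R x + (1 - l) *\<^sub>R y) \<le> ereal l * f x + ereal (1 - l) * f y)
     \<longleftrightarrow> (\<forall>x\<in>D. \<forall>y\<in>D. \<exists>l\<in>{0<..<1::real}.
            f (l *\<^sub>R x + (1 - l) *\<^sub>R y) \<le> ereal l * f x + ereal (1 - l) * f y)"
proof
  assume convex: "\<forall>x\<in>D. \<forall>y\<in>D. \<forall>l\<in>{0..1::real}.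
            f (l *\<^sub>R x + (1 - l) *\<^sub>R y) \<le> ereal l * f x + ereal (1 - l) * f y"
  have "(1 / 2 :: real) \<in> {0..1}" "(1 / 2 :: real) \<in> {0<..<1}"
    by simp_all
  with convex show "\<forall>x\<in>D. \<forall>y\<in>D. \<exists>l\<in>{0<..<1::real}.
            f (l *\<^sub>R x + (1 - l) *\<^sub>R y) \<le> ereal l * f x + ereal (1 - l) * f y"
    by blast
next
  assume comb: "\<forall>x\<in>D. \<forall>y\<in>D. \<exists>l\<in>{0<..<1::real}.
            f (l *\<^sub>R x + (1 - l) *\<^sub>R y) \<le> ereal l * f x + ereal (1 - l) * f y"
  show "\<forall>x\<in>D. \<forall>y\<in>D. \<forall>l\<in>{0..1::real}.
            f (l *\<^sub>R x + (1 - l) *\<^sub>R y) \<le> ereal l * f x + ereal (1 - l) * f y"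
  proof (intro ballI)
    fix x y l assume "x \<in> D" "y \<in> D" and l: "l \<in> {0..1::real}"
    consider a b where "f x = ereal a" "f y = ereal b" | "f x = \<infinity> \<or> f y = \<infinity>"
      using assms(2) \<open>x \<in> D\<close> \<open>y \<in> D\<close> by (metis ereal_cases)
    then show "f (l *\<^sub>R x + (1 - l) *\<^sub>R y) \<le> ereal l * f x + ereal (1 - l) * f y"
    proof cases
      case (1 a b)
      have "f (x + (1 - l) *\<^sub>R (y - x)) \<le> ereal (a + (1 - l) * (b - a))"
        using below_chord_if_convex_comb_below_chord[OF assms(1,3) \<open>x \<in> D\<close> \<open>y \<in> D\<close> 1] comb l
        by auto
      then show ?thesis
        using 1 by (simp add: algebra_simps)
    next
      case 2
      \<comment> \<open>Interior l makes the right side \<open>\<infinity>\<close>; at \<open>l = 0, 1\<close> both sides agree since \<open>0 * \<infinity> = 0\<close>.\<close>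
      then show ?thesis
        using l assms(2) \<open>x \<in> D\<close> \<open>y \<in> D\<close>
        by (cases "l = 0 \<or> l = 1") (auto simp flip: zero_ereal_def)
    qed
  qed
qed

end
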